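(* Let $u_1,\dots,u_n$ be i.i.d. $\mathcal N(0,I_d/d)$ in $\mathbb R^d$ and suppose $n\ge c\,d^2/\log d$ for some fixed constant $c>0$. For any fixed $\epsilon>0$, with probability $1-e^{-\Omega(d)}$, $$\inf_{x\in S^{d-1}}\max_{j\in[n]}u_j^\top x\ \ge\ \sqrt{\frac{(2-\epsilon)\log d}{d}}.$$
   Context: $S^{d-1}$ is the unit sphere in $\mathbb R^d$. Statements hold for all sufficiently large $d$. *)

theory Defs
  imports "HOL-Probability.Probability"
begin

text \<open>Sample space for n i.i.d. vectors u_1..u_n ~ N(0, I_d/d) in R^d:
  the coordinate (j,i) (j < n, i < d) is u_j's i-th coordinate; all coordinates are
  independent centred Gaussians with variance 1/d (standard deviation 1/sqrt d).\<close>
definition gauss_sample :: "nat \<Rightarrow> nat \<Rightarrow> (nat \<times> nat \<Rightarrow> real) measure" where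
  "gauss_sample d n =
     PiM ({..<n} \<times> {..<d}) (\<lambda>_. density lborel (normal_density 0 (1 / sqrt (real d))))"

definition unit_sphere :: "nat \<Rightarrow> (nat \<Rightarrow> real) set" where
  "unit_sphere d = {x. (\<forall>i\<ge>d. x i = 0) \<and> (\<Sum>i<d. (x i)\<^sup>2) = 1}"

definition inf_max_proj :: "nat \<Rightarrow> nat \<Rightarrow> (nat \<times> nat \<Rightarrow> real) \<Rightarrow> real" where
  "inf_max_proj d n u =
     (INF x\<in>unit_sphere d. Max ((\<lambda>j. \<Sum>i<d. u (j, i) * x i) ` {..<n}))"

end

theory Submission
  imports Defs "HOL-Real_Asymp.Real_Asymp"
begin

text \<open>
  Fix a direction \<open>y\<close> on the sphere. The projections \<open>u_j^T y\<close> are independent Gaussians of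
  variance \<open>|y|^2 / d\<close>; each exceeds \<open>s = sqrt (2 (1 - \<delta>) ln d)\<close> standard deviations with
  probability about \<open>d^-(1 - \<delta>)\<close>, so for \<open>n >= c d^2 / ln d\<close> all rows stay below that level only
  with probability \<open>exp (- d^(1 + \<delta> - o(1)))\<close>. This beats a union bound over a grid net of mesh
  \<open>d^-3\<close>, which has \<open>exp (O (d ln d))\<close> points. Requiring in addition that the entries of the
  successful row be bounded by \<open>d\<close> (which fails with probability at most \<open>d^-2\<close> by Chebyshev) lets a
  hit at a net point survive the move to any nearby point of the sphere, at the cost of \<open>1 / d\<close> in
  the threshold.
\<close>

section \<open>Gaussian tail bounds\<close>

lemma (in prob_space) normal_prob_ge_lower_bound:
  assumes D: "distributed M lborel X (normal_density 0 \<sigma>)" and \<sigma>: "0 < \<sigma>" and s: "0 \<le> s"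
  shows "exp (- (s + 1)\<^sup>2 / 2) / sqrt (2 * pi) \<le> prob {\<omega> \<in> space M. s * \<sigma> \<le> X \<omega>}"
proof -
  define h where "h = normal_density 0 \<sigma> ((s + 1) * \<sigma>)"
  have "emeasure M {\<omega> \<in> space M. s * \<sigma> \<le> X \<omega>} =
      (\<integral>\<^sup>+x. ennreal (normal_density 0 \<sigma> x) * indicator {s * \<sigma>..} x \<partial>lborel)"
  proof -
    have "{\<omega> \<in> space M. s * \<sigma> \<le> X \<omega>} = X -` {s * \<sigma>..} \<inter> space M"
      by auto
    then show ?thesis
      using distributed_emeasure[OF D, of "{s * \<sigma>..}"] by simp
  qed
  also have "\<dots> \<ge> (\<integral>\<^sup>+x. ennreal h * indicator {s * \<sigma>..(s + 1) * \<sigma>} x \<partial>lborel)"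
  proof (intro nn_integral_mono)
    fix x :: real
    \<comment> \<open>the density decreases on the positive half-line\<close>
    have "h \<le> normal_density 0 \<sigma> x" if "s * \<sigma> \<le> x" "x \<le> (s + 1) * \<sigma>"
    proof -
      have "0 \<le> s * \<sigma>"
        using s \<sigma> by simp
      then have "x\<^sup>2 \<le> ((s + 1) * \<sigma>)\<^sup>2"
        using that by (intro power_mono) auto
      then have "- ((s + 1) * \<sigma>)\<^sup>2 / (2 * \<sigma>\<^sup>2) \<le> - x\<^sup>2 / (2 * \<sigma>\<^sup>2)"
        by (intro divide_right_mono) auto
      then show ?thesis
        unfolding h_def normal_density_def by (intro mult_left_mono) auto
    qed
    then show "ennreal h * indicator {s * \<sigma>..(s + 1) * \<sigma>} x
        \<le> ennreal (normal_density 0 \<sigma> x) * indicator {s * \<sigma>..} x"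
      by (auto simp: indicator_def)
  qed
  also have "(\<integral>\<^sup>+x. ennreal h * indicator {s * \<sigma>..(s + 1) * \<sigma>} x \<partial>lborel) = ennreal h * ennreal \<sigma>"
    using \<sigma> s by (simp add: nn_integral_cmult_indicator algebra_simps)
  also have "\<dots> = ennreal (h * \<sigma>)"
    using \<sigma> by (simp add: ennreal_mult h_def)
  also have "h * \<sigma> = exp (- (s + 1)\<^sup>2 / 2) / sqrt (2 * pi)"
  proof -
    have "((s + 1) * \<sigma>)\<^sup>2 / (2 * \<sigma>\<^sup>2) = (s + 1)\<^sup>2 / 2" and "sqrt (2 * pi * \<sigma>\<^sup>2) = sqrt (2 * pi) * \<sigma>"
      using \<sigma> by (simp_all add: power_mult_distrib real_sqrt_mult)
    then show ?thesis
      using \<sigma> by (simp add: h_def normal_density_def)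
  qed
  finally show ?thesis
    by (simp add: emeasure_eq_measure)
qed

lemma (in prob_space) normal_prob_abs_ge_le:
  assumes D: "distributed M lborel X (normal_density 0 \<sigma>)" and \<sigma>: "0 < \<sigma>" and a: "0 < a"
  shows "prob {\<omega> \<in> space M. a \<le> \<bar>X \<omega>\<bar>} \<le> \<sigma>\<^sup>2 / a\<^sup>2"
proof -
  have [measurable]: "random_variable borel X"
    using distributed_measurable[OF D] by simp
  have "integrable lborel (\<lambda>x. normal_density 0 \<sigma> x * x\<^sup>2)"
    using integrable_normal_moment[OF \<sigma>, where \<mu>=0 and k=2] by simp
  then have "integrable M (\<lambda>\<omega>. (X \<omega>)\<^sup>2)"
    using distributed_integrable[OF D, of "\<lambda>x. x\<^sup>2"] by simp
  from Chebyshev_inequality[OF _ this a] show ?thesis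
    using normal_distributed_expectation[OF \<sigma> D] normal_distributed_variance[OF \<sigma> D] by simp
qed

section \<open>Independence of the sample coordinates\<close>

lemma indep_vars_PiM_components:
  assumes M: "\<And>i. i \<in> I \<Longrightarrow> prob_space (M i)"
  shows "prob_space.indep_vars (PiM I M) M (\<lambda>i \<omega>. \<omega> i) I"
proof -
  interpret prob_space "PiM I M"
    by (rule prob_space_PiM[OF M])
  show ?thesis
  proof (cases "I = {}")
    case True
    show ?thesis
      unfolding indep_vars_def indep_sets_def using True by simp
  next
    case False
    have "distr (PiM I M) (PiM I M) (\<lambda>\<omega>. \<lambda>i\<in>I. \<omega> i) = distr (PiM I M) (PiM I M) (\<lambda>\<omega>. \<omega>)"
      by (rule distr_cong) (auto simp: space_PiM)
    moreover have "PiM I (\<lambda>i. distr (PiM I M) (M i) (\<lambda>\<omega>. \<omega> i)) = PiM I M"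
      by (rule PiM_cong) (simp_all add: distr_PiM_component M)
    ultimately show ?thesis
      by (subst indep_vars_iff_distr_eq_PiM'[OF False])
        (simp_all add: measurable_component_singleton)
  qed
qed

lemma borel_measurable_PiM_component:
  assumes "\<And>i. i \<in> I \<Longrightarrow> sets (M i) = sets borel"
  shows "(\<lambda>\<omega>. \<omega> k) \<in> borel_measurable (PiM I M)"
proof (cases "k \<in> I")
  case True
  have "(\<lambda>\<omega>. \<omega> k) \<in> PiM I M \<rightarrow>\<^sub>M M k"
    by (rule measurable_component_singleton[OF True])
  moreover have "(\<lambda>x. x) \<in> M k \<rightarrow>\<^sub>M borel"
    by (rule measurable_ident_sets[OF assms[OF True]])
  ultimately show ?thesis
    by (rule measurable_compose)
next
  case False
  \<comment> \<open>off the index set every point of the space has the value \<open>undefined\<close>\<close>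
  have "(\<lambda>_. undefined) \<in> borel_measurable (PiM I M)"
    by simp
  then show ?thesis
    by (rule measurable_cong[THEN iffD1, rotated])
      (use False in \<open>auto simp: space_PiM PiE_def extensional_def\<close>)
qed

lemma (in prob_space) distributed_weighted_sum_indep_normal:
  assumes I: "finite I" and ind: "indep_vars (\<lambda>_. borel) X I"
    and \<sigma>: "\<And>i. i \<in> I \<Longrightarrow> 0 < \<sigma> i"
    and D: "\<And>i. i \<in> I \<Longrightarrow> distributed M lborel (X i) (normal_density 0 (\<sigma> i))"
    and a: "\<exists>i\<in>I. a i \<noteq> 0"
  shows "distributed M lborel (\<lambda>\<omega>. \<Sum>i\<in>I. a i * X i \<omega>)
           (normal_density 0 (sqrt (\<Sum>i\<in>I. (a i * \<sigma> i)\<^sup>2)))"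
proof -
  \<comment> \<open>\<open>sum_indep_normal\<close> needs positive variances, so drop the vanishing terms\<close>
  define J where "J = {i \<in> I. a i \<noteq> 0}"
  have J: "finite J" "J \<noteq> {}" "J \<subseteq> I"
    using I a by (auto simp: J_def)
  have "distributed M lborel (\<lambda>\<omega>. \<Sum>i\<in>J. a i * X i \<omega>)
      (normal_density (\<Sum>i\<in>J. 0) (sqrt (\<Sum>i\<in>J. (\<bar>a i\<bar> * \<sigma> i)\<^sup>2)))"
  proof (rule sum_indep_normal[OF J(1,2)])
    show "indep_vars (\<lambda>_. borel) (\<lambda>i \<omega>. a i * X i \<omega>) J"
      using indep_vars_compose2[OF indep_vars_subset[OF ind J(3)], of "\<lambda>i x. a i * x" "\<lambda>_. borel"]
      by simp
    show "0 < \<bar>a i\<bar> * \<sigma> i" if "i \<in> J" for i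
      using that \<sigma> J(3) by (auto simp: J_def)
    show "distributed M lborel (\<lambda>\<omega>. a i * X i \<omega>) (normal_density 0 (\<bar>a i\<bar> * \<sigma> i))" if "i \<in> J" for i
      using normal_density_affine[OF D \<sigma>, of i "a i" 0] that J(3) by (auto simp: J_def)
  qed
  moreover have "(\<Sum>i\<in>J. a i * X i \<omega>) = (\<Sum>i\<in>I. a i * X i \<omega>)" for \<omega>
    by (rule sum.mono_neutral_left) (auto simp: J_def I)
  moreover have "(\<Sum>i\<in>J. (\<bar>a i\<bar> * \<sigma> i)\<^sup>2) = (\<Sum>i\<in>I. (a i * \<sigma> i)\<^sup>2)"
  proof -
    have "(\<Sum>i\<in>J. (a i * \<sigma> i)\<^sup>2) = (\<Sum>i\<in>I. (a i * \<sigma> i)\<^sup>2)"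
      by (rule sum.mono_neutral_left) (auto simp: J_def I)
    then show ?thesis
      by (simp add: power_mult_distrib)
  qed
  ultimately show ?thesis
    by simp
qed

lemma prob_space_gauss_sample: "0 < d \<Longrightarrow> prob_space (gauss_sample d n)"
  unfolding gauss_sample_def by (simp add: prob_space_PiM prob_space_normal_density)

lemma borel_measurable_gauss_sample_component [measurable]:
  "(\<lambda>u. u k) \<in> borel_measurable (gauss_sample d n)"
  unfolding gauss_sample_def by (rule borel_measurable_PiM_component) simp

lemma indep_vars_gauss_sample:
  assumes "0 < d"
  shows "prob_space.indep_vars (gauss_sample d n) (\<lambda>_. borel) (\<lambda>k u. u k) ({..<n} \<times> {..<d})"
proof -
  interpret prob_space "gauss_sample d n"
    by (rule prob_space_gauss_sample[OF assms])
  let ?N = "density lborel (normal_density 0 (1 / sqrt (real d)))"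
  have "indep_vars (\<lambda>_. ?N) (\<lambda>k u. u k) ({..<n} \<times> {..<d})"
    using indep_vars_PiM_components[of "{..<n} \<times> {..<d}" "\<lambda>_. ?N"] assms
    by (simp add: gauss_sample_def prob_space_normal_density)
  from indep_vars_compose2[OF this, of "\<lambda>_ x. x" "\<lambda>_. borel"] show ?thesis
    by (simp add: measurable_ident_sets)
qed

lemma distributed_gauss_sample_component:
  assumes d: "0 < d" and k: "k \<in> {..<n} \<times> {..<d}"
  shows "distributed (gauss_sample d n) lborel (\<lambda>u. u k) (normal_density 0 (1 / sqrt (real d)))"
proof -
  let ?N = "density lborel (normal_density 0 (1 / sqrt (real d)))"
  have "distr (gauss_sample d n) lborel (\<lambda>u. u k) = distr (gauss_sample d n) ?N (\<lambda>u. u k)"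
    by (rule distr_cong) simp_all
  also have "\<dots> = ?N"
    unfolding gauss_sample_def using k d
    by (intro distr_PiM_component prob_space_normal_density) auto
  finally show ?thesis
    by (simp add: distributed_def)
qed

lemma distributed_gauss_sample_row:
  assumes d: "0 < d" and j: "j < n" and y: "\<exists>i<d. y i \<noteq> 0"
  shows "distributed (gauss_sample d n) lborel (\<lambda>u. \<Sum>i<d. u (j, i) * y i)
           (normal_density 0 (sqrt ((\<Sum>i<d. (y i)\<^sup>2) / real d)))"
proof -
  interpret prob_space "gauss_sample d n"
    by (rule prob_space_gauss_sample[OF d])
  let ?R = "Pair j ` {..<d}"
  have R: "?R \<subseteq> {..<n} \<times> {..<d}"
    using j by auto
  have "distributed (gauss_sample d n) lborel (\<lambda>u. \<Sum>k\<in>?R. y (snd k) * u k)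
      (normal_density 0 (sqrt (\<Sum>k\<in>?R. (y (snd k) * (1 / sqrt (real d)))\<^sup>2)))"
    using y R d
    by (intro distributed_weighted_sum_indep_normal indep_vars_subset[OF indep_vars_gauss_sample]
        distributed_gauss_sample_component) auto
  moreover have "inj_on (Pair j) {..<d}"
    by (simp add: inj_on_def)
  ultimately show ?thesis
    using d by (simp add: sum.reindex power_divide sum_divide_distrib mult.commute)
qed

section \<open>Rows hitting a fixed direction\<close>

definition row_hits ::
    "nat \<Rightarrow> (nat \<Rightarrow> real) \<Rightarrow> real \<Rightarrow> real \<Rightarrow> nat \<Rightarrow> (nat \<times> nat \<Rightarrow> real) \<Rightarrow> bool" where
  "row_hits d y b M j u \<longleftrightarrow> b \<le> (\<Sum>i<d. u (j, i) * y i) \<and> (\<forall>i<d. \<bar>u (j, i)\<bar> < M)"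

lemma sets_row_hits [measurable]:
  "{u \<in> space (gauss_sample d n). row_hits d y b M j u} \<in> sets (gauss_sample d n)"
  unfolding row_hits_def by measurable

lemma prob_row_hits_ge:
  assumes d: "0 < d" and j: "j < n" and \<rho>: "0 < \<rho>" "\<rho> \<le> (\<Sum>i<d. (y i)\<^sup>2)"
    and s: "0 \<le> s" and M: "0 < M"
  shows "exp (- (s + 1)\<^sup>2 / 2) / sqrt (2 * pi) - 1 / M\<^sup>2
    \<le> measure (gauss_sample d n)
        {u \<in> space (gauss_sample d n). row_hits d y (s * sqrt (\<rho> / d)) M j u}"
proof -
  let ?P = "gauss_sample d n"
  interpret prob_space ?P
    by (rule prob_space_gauss_sample[OF d])
  let ?X = "\<lambda>u. \<Sum>i<d. u (j, i) * y i"
  let ?hits = "{u \<in> space ?P. row_hits d y (s * sqrt (\<rho> / d)) M j u}"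
  let ?large = "\<lambda>i. {u \<in> space ?P. M \<le> \<bar>u (j, i)\<bar>}"
  define \<tau> where "\<tau> = sqrt ((\<Sum>i<d. (y i)\<^sup>2) / d)"
  have "\<exists>i<d. y i \<noteq> 0"
    by (rule ccontr) (use \<rho> in simp)
  then have X: "distributed ?P lborel ?X (normal_density 0 \<tau>)"
    unfolding \<tau>_def by (rule distributed_gauss_sample_row[OF d j])
  have \<tau>: "sqrt (\<rho> / d) \<le> \<tau>" "0 < \<tau>"
    using \<rho> d by (auto simp: \<tau>_def divide_right_mono)
  have "{u \<in> space ?P. s * \<tau> \<le> ?X u} \<subseteq> ?hits \<union> (\<Union>i<d. ?large i)"
    using mult_left_mono[OF \<tau>(1) s] by (auto simp: row_hits_def not_less)
  then have "prob {u \<in> space ?P. s * \<tau> \<le> ?X u} \<le> prob (?hits \<union> (\<Union>i<d. ?large i))"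
    by (rule finite_measure_mono) measurable
  also have "\<dots> \<le> prob ?hits + prob (\<Union>i<d. ?large i)"
    by (rule measure_Un_le) measurable
  also have "prob (\<Union>i<d. ?large i) \<le> (\<Sum>i<d. prob (?large i))"
    by (rule finite_measure_subadditive_finite) auto
  also have "\<dots> \<le> (\<Sum>i<d. (1 / sqrt d)\<^sup>2 / M\<^sup>2)"
    using j d M
    by (intro sum_mono normal_prob_abs_ge_le distributed_gauss_sample_component) auto
  also have "\<dots> = 1 / M\<^sup>2"
    using d by (simp add: power_divide)
  finally show ?thesis
    using normal_prob_ge_lower_bound[OF X \<tau>(2) s] by linarith
qed

lemma row_hits_restrict:
  "row_hits d y b M j (restrict u ({j} \<times> {..<d})) = row_hits d y b M j u"
  unfolding row_hits_def by (intro conj_cong arg_cong2[where f = "(\<le>)"] sum.cong all_cong) auto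

lemma indep_events_not_row_hits:
  assumes d: "0 < d"
  shows "prob_space.indep_events (gauss_sample d n)
    (\<lambda>j. {u \<in> space (gauss_sample d n). \<not> row_hits d y b M j u}) {..<n}"
proof -
  interpret prob_space "gauss_sample d n"
    by (rule prob_space_gauss_sample[OF d])
  \<comment> \<open>the rows are independent because they occupy disjoint blocks of coordinates\<close>
  have "indep_vars (\<lambda>j. PiM ({j} \<times> {..<d}) (\<lambda>_. borel)) (\<lambda>j u. restrict u ({j} \<times> {..<d})) {..<n}"
    using indep_vars_restrict[OF indep_vars_gauss_sample[OF d], of "{..<n}" "\<lambda>j. {j} \<times> {..<d}"]
    by (auto simp: disjoint_family_on_def)
  then have "indep_events (\<lambda>j. {u \<in> space (gauss_sample d n).
      \<not> row_hits d y b M j (restrict u ({j} \<times> {..<d}))}) {..<n}"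
  proof (rule indep_eventsI_indep_vars)
    fix j :: nat
    have [measurable]: "(\<lambda>x. x k) \<in> borel_measurable (PiM ({j} \<times> {..<d}) (\<lambda>_. borel))" for k
      by (rule borel_measurable_PiM_component) simp
    show "{x \<in> space (PiM ({j} \<times> {..<d}) (\<lambda>_. borel)). \<not> row_hits d y b M j x}
        \<in> sets (PiM ({j} \<times> {..<d}) (\<lambda>_. borel))"
      unfolding row_hits_def by measurable
  qed
  then show ?thesis
    by (simp add: row_hits_restrict)
qed

lemma prob_no_row_hits_le:
  assumes d: "0 < d"
    and q: "\<And>j. j < n \<Longrightarrow>
      q \<le> measure (gauss_sample d n) {u \<in> space (gauss_sample d n). row_hits d y b M j u}"
  shows "measure (gauss_sample d n) {u \<in> space (gauss_sample d n). \<forall>j<n. \<not> row_hits d y b M j u}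
    \<le> exp (- q * n)"
proof -
  let ?P = "gauss_sample d n"
  interpret prob_space ?P
    by (rule prob_space_gauss_sample[OF d])
  define miss where "miss = (\<lambda>j. {u \<in> space ?P. \<not> row_hits d y b M j u})"
  have indep: "indep_events miss {..<n}"
    unfolding miss_def by (rule indep_events_not_row_hits[OF d])
  have prob_miss: "prob (miss j) = 1 - prob {u \<in> space ?P. row_hits d y b M j u}" for j
  proof -
    have "miss j = space ?P - {u \<in> space ?P. row_hits d y b M j u}"
      by (auto simp: miss_def)
    then show ?thesis
      using prob_compl[OF sets_row_hits] by simp
  qed
  have "prob {u \<in> space ?P. \<forall>j<n. \<not> row_hits d y b M j u}
      = (\<Prod>j<n. 1 - prob {u \<in> space ?P. row_hits d y b M j u})"
  proof (cases "n = 0")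
    case False
    then have "{u \<in> space ?P. \<forall>j<n. \<not> row_hits d y b M j u} = (\<Inter>j<n. miss j)"
      by (auto simp: miss_def)
    moreover have "prob (\<Inter>j<n. miss j) = (\<Prod>j<n. prob (miss j))"
      using indep False unfolding indep_events_def
      by (meson finite_lessThan lessThan_empty_iff order_refl)
    ultimately show ?thesis
      by (simp add: prob_miss)
  qed (use prob_space in simp)
  also have "\<dots> \<le> (\<Prod>j<n. exp (- q))"
    using q exp_ge_add_one_self[of "- q"]
    by (intro prod_mono) (auto simp: prob_le_1 intro: order_trans[rotated])
  also have "\<dots> = exp (- q * n)"
    by (simp add: exp_of_nat_mult[symmetric] mult.commute)
  finally show ?thesis .
qed

lemma prob_net_hits_ge:
  assumes d: "0 < d" and N: "finite N"
    and q: "\<And>y j. y \<in> N \<Longrightarrow> j < n \<Longrightarrow>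
      q \<le> measure (gauss_sample d n) {u \<in> space (gauss_sample d n). row_hits d y b M j u}"
  shows "1 - card N * exp (- q * n)
    \<le> measure (gauss_sample d n) {u \<in> space (gauss_sample d n). \<forall>y\<in>N. \<exists>j<n. row_hits d y b M j u}"
proof -
  let ?P = "gauss_sample d n"
  interpret prob_space ?P
    by (rule prob_space_gauss_sample[OF d])
  let ?miss = "\<lambda>y. {u \<in> space ?P. \<forall>j<n. \<not> row_hits d y b M j u}"
  have miss: "?miss y \<in> events" for y
    unfolding row_hits_def by measurable
  have "prob (\<Union>y\<in>N. ?miss y) \<le> (\<Sum>y\<in>N. prob (?miss y))"
    by (rule finite_measure_subadditive_finite[OF N]) auto
  also have "\<dots> \<le> (\<Sum>y\<in>N. exp (- q * n))"
    using q by (intro sum_mono prob_no_row_hits_le[OF d]) auto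
  finally have "prob (\<Union>y\<in>N. ?miss y) \<le> card N * exp (- q * n)"
    by simp
  moreover have "{u \<in> space ?P. \<forall>y\<in>N. \<exists>j<n. row_hits d y b M j u} = space ?P - (\<Union>y\<in>N. ?miss y)"
    by auto
  moreover have "prob (space ?P - (\<Union>y\<in>N. ?miss y)) = 1 - prob (\<Union>y\<in>N. ?miss y)"
    by (intro prob_compl sets.finite_UN N miss)
  ultimately show ?thesis
    by simp
qed

section \<open>Grid nets on the sphere\<close>

lemma unit_sphere_abs_le_1:
  assumes "x \<in> unit_sphere d"
  shows "\<bar>x i\<bar> \<le> 1"
proof (cases "i < d")
  case True
  then have "(x i)\<^sup>2 \<le> (\<Sum>i<d. (x i)\<^sup>2)"
    by (intro member_le_sum) auto
  with assms show ?thesis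
    by (simp add: unit_sphere_def abs_square_le_1)
next
  case False
  with assms show ?thesis
    by (simp add: unit_sphere_def)
qed

lemma le_inf_max_proj_iff:
  assumes d: "0 < d" and n: "0 < n"
  shows "t \<le> inf_max_proj d n u \<longleftrightarrow> (\<forall>x\<in>unit_sphere d. \<exists>j<n. t \<le> (\<Sum>i<d. u (j, i) * x i))"
proof -
  let ?f = "\<lambda>x. Max ((\<lambda>j. \<Sum>i<d. u (j, i) * x i) ` {..<n})"
  have "(\<lambda>i. if i = 0 then 1 else 0) \<in> unit_sphere d"
    using d by (simp add: unit_sphere_def if_distrib[of power2] cong: if_cong)
  then have ne: "unit_sphere d \<noteq> {}"
    by blast
  have "- (\<Sum>i<d. \<bar>u (0, i)\<bar>) \<le> ?f x" if x: "x \<in> unit_sphere d" for x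
  proof -
    have "- \<bar>u (0, i)\<bar> \<le> u (0, i) * x i" for i
    proof -
      have "\<bar>u (0, i) * x i\<bar> \<le> \<bar>u (0, i)\<bar>"
        using mult_left_mono[OF unit_sphere_abs_le_1[OF x, of i], of "\<bar>u (0, i)\<bar>"]
        by (simp add: abs_mult)
      then show ?thesis
        by linarith
    qed
    then have "- (\<Sum>i<d. \<bar>u (0, i)\<bar>) \<le> (\<Sum>i<d. u (0, i) * x i)"
      by (simp add: sum_negf[symmetric] sum_mono)
    also have "\<dots> \<le> ?f x"
      using n by (intro Max_ge) auto
    finally show ?thesis .
  qed
  then have "bdd_below (?f ` unit_sphere d)"
    by (rule bdd_belowI2)
  then show ?thesis
    unfolding inf_max_proj_def using ne n
    by (simp add: le_cINF_iff Max_ge_iff lessThan_empty_iff Bex_def)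
qed

lemma sum_mult_ge_of_close:
  fixes x y w :: "nat \<Rightarrow> real"
  assumes close: "\<forall>i<d. \<bar>x i - y i\<bar> \<le> \<eta>" and bound: "\<forall>i<d. \<bar>w i\<bar> \<le> M"
  shows "(\<Sum>i<d. w i * y i) - real d * M * \<eta> \<le> (\<Sum>i<d. w i * x i)"
proof -
  have "(\<Sum>i<d. w i * y i) - (\<Sum>i<d. w i * x i) = (\<Sum>i<d. w i * (y i - x i))"
    by (simp add: sum_subtractf right_diff_distrib)
  also have "\<dots> \<le> (\<Sum>i<d. M * \<eta>)"
  proof (rule sum_mono)
    fix i
    assume "i \<in> {..<d}"
    then have "\<bar>w i\<bar> \<le> M" "\<bar>y i - x i\<bar> \<le> \<eta>"
      using close bound by (auto simp: abs_minus_commute)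
    then have "\<bar>w i * (y i - x i)\<bar> \<le> M * \<eta>"
      unfolding abs_mult by (intro mult_mono) (auto intro: order_trans[OF abs_ge_zero])
    then show "w i * (y i - x i) \<le> M * \<eta>"
      by (simp add: abs_le_iff)
  qed
  finally show ?thesis
    by simp
qed

definition grid :: "nat \<Rightarrow> real \<Rightarrow> int \<Rightarrow> (nat \<Rightarrow> real) set" where
  "grid d \<eta> K = (\<lambda>k i. if i < d then \<eta> * of_int (k i) else 0) ` PiE {..<d} (\<lambda>_. {-K..K})"

definition sphere_net :: "nat \<Rightarrow> real \<Rightarrow> int \<Rightarrow> (nat \<Rightarrow> real) set" where
  "sphere_net d \<eta> K = {y \<in> grid d \<eta> K. \<exists>x\<in>unit_sphere d. \<forall>i<d. \<bar>x i - y i\<bar> \<le> \<eta>}"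

lemma finite_grid: "finite (grid d \<eta> K)"
  unfolding grid_def by (intro finite_imageI finite_PiE) auto

lemma finite_sphere_net [simp]: "finite (sphere_net d \<eta> K)"
  unfolding sphere_net_def using finite_grid by simp

lemma card_sphere_net_le:
  assumes "0 \<le> K"
  shows "card (sphere_net d \<eta> K) \<le> (2 * of_int K + 1 :: real) ^ d"
proof -
  have "card (sphere_net d \<eta> K) \<le> card (grid d \<eta> K)"
    unfolding sphere_net_def by (intro card_mono finite_grid) auto
  also have "\<dots> \<le> card (PiE {..<d} (\<lambda>_. {-K..K}))"
    unfolding grid_def by (intro card_image_le finite_PiE) auto
  also have "\<dots> = nat (2 * K + 1) ^ d"
    by (simp add: card_PiE)
  finally show ?thesis
    using assms by (simp add: of_nat_le_iff[symmetric, where 'a = real] of_nat_power)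
qed

lemma sphere_net_covers:
  assumes x: "x \<in> unit_sphere d" and \<eta>: "0 < \<eta>" and K: "1 / \<eta> + 1 \<le> K"
  shows "\<exists>y\<in>sphere_net d \<eta> K. \<forall>i<d. \<bar>x i - y i\<bar> \<le> \<eta>"
proof -
  define k where "k = restrict (\<lambda>i. \<lfloor>x i / \<eta>\<rfloor>) {..<d}"
  define y where "y i = (if i < d then \<eta> * of_int (k i) else 0)" for i
  have "\<lfloor>x i / \<eta>\<rfloor> \<in> {-K..K}" for i
  proof -
    have "- 1 \<le> x i" "x i \<le> 1"
      using unit_sphere_abs_le_1[OF x, of i] by auto
    then have "x i / \<eta> \<le> 1 / \<eta>" "- (1 / \<eta>) \<le> x i / \<eta>"
      using divide_right_mono[of _ _ \<eta>] \<eta> by fastforce+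
    then have "of_int \<lfloor>x i / \<eta>\<rfloor> \<le> real_of_int K" "- real_of_int K \<le> of_int \<lfloor>x i / \<eta>\<rfloor>"
      using K by linarith+
    then show ?thesis
      by simp
  qed
  then have grid: "y \<in> grid d \<eta> K"
    unfolding grid_def y_def k_def by (intro image_eqI[of _ _ k]) (auto simp: k_def)
  have close: "\<forall>i<d. \<bar>x i - y i\<bar> \<le> \<eta>"
  proof (intro allI impI)
    fix i
    assume "i < d"
    have "\<eta> * of_int \<lfloor>x i / \<eta>\<rfloor> \<le> x i" "x i - \<eta> \<le> \<eta> * of_int \<lfloor>x i / \<eta>\<rfloor>"
      using \<eta> mult_left_mono[OF of_int_floor_le[of "x i / \<eta>"], of \<eta>]
        mult_left_mono[OF less_imp_le[OF real_of_int_floor_gt_diff_one[of "x i / \<eta>"]], of \<eta>]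
      by (simp_all add: right_diff_distrib)
    with \<open>i < d\<close> show "\<bar>x i - y i\<bar> \<le> \<eta>"
      by (simp add: y_def k_def)
  qed
  have "y \<in> sphere_net d \<eta> K"
    unfolding sphere_net_def using grid x close by (intro CollectI conjI bexI[of _ x])
  with close show ?thesis
    by (intro bexI[of _ y])
qed

lemma sum_sq_sphere_net_ge:
  assumes "y \<in> sphere_net d \<eta> K"
  shows "1 - 2 * d * \<eta> \<le> (\<Sum>i<d. (y i)\<^sup>2)"
proof -
  obtain x where x: "x \<in> unit_sphere d" and close: "\<forall>i<d. \<bar>x i - y i\<bar> \<le> \<eta>"
    using assms by (auto simp: sphere_net_def)
  have "(x i)\<^sup>2 - 2 * \<eta> \<le> (y i)\<^sup>2" if "i < d" for i
  proof -
    have "\<bar>x i\<bar> * \<bar>x i - y i\<bar> \<le> 1 * \<eta>"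
      using unit_sphere_abs_le_1[OF x, of i] close that by (intro mult_mono) auto
    then have "x i * (x i - y i) \<le> \<eta>"
      using abs_ge_self[of "x i * (x i - y i)"] by (simp add: abs_mult)
    moreover have "(y i)\<^sup>2 = (x i)\<^sup>2 - 2 * (x i * (x i - y i)) + (x i - y i)\<^sup>2"
      by (simp add: power2_eq_square algebra_simps)
    ultimately show ?thesis
      using zero_le_power2[of "x i - y i"] by linarith
  qed
  then have "(\<Sum>i<d. (x i)\<^sup>2 - 2 * \<eta>) \<le> (\<Sum>i<d. (y i)\<^sup>2)"
    by (intro sum_mono) simp
  with x show ?thesis
    by (simp add: unit_sphere_def sum_subtractf)
qed

lemma sphere_hits_of_net_hits:
  fixes b M \<eta> :: real
  assumes hits: "\<forall>y\<in>sphere_net d \<eta> K. \<exists>j<n. b \<le> (\<Sum>i<d. u (j, i) * y i) \<and> (\<forall>i<d. \<bar>u (j, i)\<bar> \<le> M)"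
    and \<eta>: "0 < \<eta>" and K: "1 / \<eta> + 1 \<le> K" and x: "x \<in> unit_sphere d"
  shows "\<exists>j<n. b - d * M * \<eta> \<le> (\<Sum>i<d. u (j, i) * x i)"
proof -
  obtain y where "y \<in> sphere_net d \<eta> K" and close: "\<forall>i<d. \<bar>x i - y i\<bar> \<le> \<eta>"
    using sphere_net_covers[OF x \<eta> K] by blast
  then obtain j where "j < n" "b \<le> (\<Sum>i<d. u (j, i) * y i)" and bound: "\<forall>i<d. \<bar>u (j, i)\<bar> \<le> M"
    using hits by blast
  moreover have "(\<Sum>i<d. u (j, i) * y i) - d * M * \<eta> \<le> (\<Sum>i<d. u (j, i) * x i)"
    by (rule sum_mult_ge_of_close[OF close bound])
  ultimately show ?thesis
    by (intro exI[of _ j]) auto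
qed

lemma net_hits_of_sphere_hits:
  fixes t M \<eta> :: real
  assumes hits: "\<forall>x\<in>unit_sphere d. \<exists>j<n. t \<le> (\<Sum>i<d. u (j, i) * x i)"
    and bound: "\<forall>j<n. \<forall>i<d. \<bar>u (j, i)\<bar> \<le> M" and y: "y \<in> sphere_net d \<eta> K"
  shows "\<exists>j<n. t - d * M * \<eta> \<le> (\<Sum>i<d. u (j, i) * y i)"
proof -
  obtain x where "x \<in> unit_sphere d" and close: "\<forall>i<d. \<bar>y i - x i\<bar> \<le> \<eta>"
    using y by (auto simp: sphere_net_def abs_minus_commute)
  then obtain j where "j < n" "t \<le> (\<Sum>i<d. u (j, i) * x i)"
    using hits by blast
  moreover have "(\<Sum>i<d. u (j, i) * x i) - d * M * \<eta> \<le> (\<Sum>i<d. u (j, i) * y i)"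
    using \<open>j < n\<close> bound by (intro sum_mult_ge_of_close[OF close]) auto
  ultimately show ?thesis
    by (intro exI[of _ j]) auto
qed

section \<open>From the net to the whole sphere\<close>

lemma ex_le_minus_inverse_imp_ex_le:
  fixes a :: "'a \<Rightarrow> real"
  assumes J: "finite J" and approx: "\<forall>m. \<exists>j\<in>J. t - C / Suc m \<le> a j"
  shows "\<exists>j\<in>J. t \<le> a j"
proof -
  have ne: "J \<noteq> {}"
    using approx by blast
  have "\<forall>m. t - C / Suc m \<le> Max (a ` J)"
    using approx J by (meson Max_ge finite_imageI image_eqI order_trans)
  moreover have "(\<lambda>m. t - C / Suc m) \<longlonglongrightarrow> t"
    by real_asymp
  ultimately have "t \<le> Max (a ` J)"
    by (intro LIMSEQ_le_const2) auto
  then show ?thesis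
    using J ne by (simp add: Max_ge_iff)
qed

lemma sets_sphere_hits:
  "{u \<in> space (gauss_sample d n). \<forall>x\<in>unit_sphere d. \<exists>j<n. t \<le> (\<Sum>i<d. u (j, i) * x i)}
    \<in> sets (gauss_sample d n)"
proof -
  \<comment> \<open>for entries bounded by \<open>R\<close>, the condition on the sphere reduces to countably many finite nets\<close>
  have "(\<forall>x\<in>unit_sphere d. \<exists>j<n. t \<le> (\<Sum>i<d. u (j, i) * x i)) \<longleftrightarrow>
      (\<forall>R :: nat. (\<forall>j<n. \<forall>i<d. \<bar>u (j, i)\<bar> \<le> R) \<longrightarrow>
        (\<forall>m. \<forall>y\<in>sphere_net d (1 / Suc m) (int m + 2).
           \<exists>j<n. t - real d * R * (1 / Suc m) \<le> (\<Sum>i<d. u (j, i) * y i)))"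
    for u :: "nat \<times> nat \<Rightarrow> real"
  proof (intro iffI allI impI ballI)
    fix R m :: nat and y
    assume "\<forall>x\<in>unit_sphere d. \<exists>j<n. t \<le> (\<Sum>i<d. u (j, i) * x i)"
      and "\<forall>j<n. \<forall>i<d. \<bar>u (j, i)\<bar> \<le> R" and "y \<in> sphere_net d (1 / Suc m) (int m + 2)"
    then show "\<exists>j<n. t - real d * R * (1 / Suc m) \<le> (\<Sum>i<d. u (j, i) * y i)"
      by (rule net_hits_of_sphere_hits)
  next
    fix x
    assume hits: "\<forall>R :: nat. (\<forall>j<n. \<forall>i<d. \<bar>u (j, i)\<bar> \<le> R) \<longrightarrow>
        (\<forall>m. \<forall>y\<in>sphere_net d (1 / Suc m) (int m + 2).
           \<exists>j<n. t - real d * R * (1 / Suc m) \<le> (\<Sum>i<d. u (j, i) * y i))"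
      and x: "x \<in> unit_sphere d"
    obtain R :: nat where "(\<Sum>j<n. \<Sum>i<d. \<bar>u (j, i)\<bar>) \<le> R"
      using real_arch_simple by blast
    moreover have "\<bar>u (j, i)\<bar> \<le> (\<Sum>j<n. \<Sum>i<d. \<bar>u (j, i)\<bar>)" if "j < n" "i < d" for j i
      using that
      by (intro order_trans[OF member_le_sum member_le_sum[where f = "\<lambda>j. \<Sum>i<d. \<bar>u (j, i)\<bar>"]])
        (auto intro: sum_nonneg)
    ultimately have R: "\<forall>j<n. \<forall>i<d. \<bar>u (j, i)\<bar> \<le> R"
      by force
    have "\<exists>j\<in>{..<n}. t - 2 * real d * R / Suc m \<le> (\<Sum>i<d. u (j, i) * x i)" for m
    proof -
      have "\<forall>y\<in>sphere_net d (1 / Suc m) (int m + 2). \<exists>j<n.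
          t - real d * R * (1 / Suc m) \<le> (\<Sum>i<d. u (j, i) * y i) \<and> (\<forall>i<d. \<bar>u (j, i)\<bar> \<le> R)"
        using hits R by blast
      from sphere_hits_of_net_hits[OF this _ _ x] obtain j where
        "j < n" "t - real d * R * (1 / Suc m) - real d * R * (1 / Suc m) \<le> (\<Sum>i<d. u (j, i) * x i)"
        by auto
      moreover have "2 * real d * R / Suc m = real d * R * (1 / Suc m) + real d * R * (1 / Suc m)"
        by simp
      ultimately have "t - 2 * real d * R / Suc m \<le> (\<Sum>i<d. u (j, i) * x i)"
        by linarith
      with \<open>j < n\<close> show ?thesis
        by blast
    qed
    then have "\<exists>j\<in>{..<n}. t \<le> (\<Sum>i<d. u (j, i) * x i)"
      by (intro ex_le_minus_inverse_imp_ex_le[where C = "2 * real d * R"]) auto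
    then show "\<exists>j<n. t \<le> (\<Sum>i<d. u (j, i) * x i)"
      by auto
  qed
  moreover have "Measurable.pred (gauss_sample d n)
      (\<lambda>u. \<forall>R :: nat. (\<forall>j<n. \<forall>i<d. \<bar>u (j, i)\<bar> \<le> R) \<longrightarrow>
        (\<forall>m. \<forall>y\<in>sphere_net d (1 / Suc m) (int m + 2).
           \<exists>j<n. t - real d * R * (1 / Suc m) \<le> (\<Sum>i<d. u (j, i) * y i)))"
    by measurable
  ultimately show ?thesis
    by (simp add: pred_def)
qed

lemma prob_le_inf_max_proj_ge:
  fixes s \<rho> \<eta> M t :: real and K :: int
  assumes d: "0 < d" and n: "0 < n" and \<eta>: "0 < \<eta>" and K: "1 / \<eta> + 1 \<le> K"
    and \<rho>: "0 < \<rho>" "\<rho> \<le> 1 - 2 * d * \<eta>" and s: "0 \<le> s" and M: "0 < M"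
    and t: "t \<le> s * sqrt (\<rho> / d) - d * M * \<eta>"
  shows "1 - card (sphere_net d \<eta> K) * exp (- (exp (- (s + 1)\<^sup>2 / 2) / sqrt (2 * pi) - 1 / M\<^sup>2) * n)
    \<le> measure (gauss_sample d n) {u \<in> space (gauss_sample d n). t \<le> inf_max_proj d n u}"
proof -
  let ?P = "gauss_sample d n"
  let ?N = "sphere_net d \<eta> K"
  let ?b = "s * sqrt (\<rho> / d)"
  interpret prob_space ?P
    by (rule prob_space_gauss_sample[OF d])
  have "exp (- (s + 1)\<^sup>2 / 2) / sqrt (2 * pi) - 1 / M\<^sup>2
      \<le> prob {u \<in> space ?P. row_hits d y ?b M j u}" if "y \<in> ?N" "j < n" for y j
    using sum_sq_sphere_net_ge[OF that(1)] \<rho>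
    by (intro prob_row_hits_ge[OF d that(2) \<rho>(1) _ s M]) simp
  then have "1 - card ?N * exp (- (exp (- (s + 1)\<^sup>2 / 2) / sqrt (2 * pi) - 1 / M\<^sup>2) * n)
      \<le> prob {u \<in> space ?P. \<forall>y\<in>?N. \<exists>j<n. row_hits d y ?b M j u}"
    by (intro prob_net_hits_ge[OF d finite_sphere_net])
  also have "\<dots> \<le> prob {u \<in> space ?P. \<forall>x\<in>unit_sphere d. \<exists>j<n. t \<le> (\<Sum>i<d. u (j, i) * x i)}"
  proof (rule finite_measure_mono[OF _ sets_sphere_hits], safe)
    fix u x
    assume "\<forall>y\<in>?N. \<exists>j<n. row_hits d y ?b M j u" and x: "x \<in> unit_sphere d"
    then have "\<forall>y\<in>?N. \<exists>j<n. ?b \<le> (\<Sum>i<d. u (j, i) * y i) \<and> (\<forall>i<d. \<bar>u (j, i)\<bar> \<le> M)"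
      by (fastforce simp: row_hits_def less_imp_le)
    from sphere_hits_of_net_hits[OF this \<eta> K x] obtain j where
      "j < n" "?b - d * M * \<eta> \<le> (\<Sum>i<d. u (j, i) * x i)"
      by blast
    with t show "\<exists>j<n. t \<le> (\<Sum>i<d. u (j, i) * x i)"
      by (intro exI[of _ j]) auto
  qed
  also have "\<dots> = prob {u \<in> space ?P. t \<le> inf_max_proj d n u}"
    using le_inf_max_proj_iff[OF d n] by simp
  finally show ?thesis .
qed

section \<open>Choice of the parameters\<close>

lemma exp_neg_shifted_sq_ge:
  fixes \<delta> L :: real
  assumes "0 \<le> \<delta>" "\<delta> \<le> 1" "0 \<le> L"
  shows "exp (- (1 - \<delta>) * L - 2 * sqrt L - 1 / 2) \<le> exp (- (sqrt (2 * (1 - \<delta>) * L) + 1)\<^sup>2 / 2)"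
proof -
  define s where "s = sqrt (2 * (1 - \<delta>) * L)"
  have "2 * (1 - \<delta>) * L \<le> 2\<^sup>2 * L"
    using assms by (intro mult_right_mono) auto
  then have "s \<le> 2 * sqrt L"
    unfolding s_def using real_sqrt_le_mono by (fastforce simp: real_sqrt_mult)
  moreover have "s\<^sup>2 / 2 = (1 - \<delta>) * L"
    using assms by (simp add: s_def)
  moreover have "(s + 1)\<^sup>2 / 2 = s\<^sup>2 / 2 + s + 1 / 2"
    by (simp add: power2_sum)
  ultimately have "(s + 1)\<^sup>2 / 2 \<le> (1 - \<delta>) * L + 2 * sqrt L + 1 / 2"
    by linarith
  then show ?thesis
    unfolding s_def[symmetric] by (simp add: algebra_simps)
qed

lemma prob_le_inf_max_proj_ge_1_minus_exp:
  fixes \<delta> t :: real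
  assumes d: "0 < d" and \<delta>: "0 < \<delta>" "\<delta> < 1" "2 / (real d)\<^sup>2 \<le> \<delta>"
    and t: "t \<le> (1 - \<delta>) * sqrt (2 * ln d / d) - 1 / d"
    and n: "d * ln (2 * real d ^ 3 + 3) + d
      \<le> (exp (- (1 - \<delta>) * ln d - 2 * sqrt (ln d) - 1 / 2) / sqrt (2 * pi) - 1 / (real d)\<^sup>2) * n"
  shows "1 - exp (- real d)
    \<le> measure (gauss_sample d n) {u \<in> space (gauss_sample d n). t \<le> inf_max_proj d n u}"
proof -
  define L where "L = ln (real d)"
  define s where "s = sqrt (2 * (1 - \<delta>) * L)"
  define p where "p = exp (- (s + 1)\<^sup>2 / 2) / sqrt (2 * pi) - 1 / (real d)\<^sup>2"
  define q where "q = exp (- (1 - \<delta>) * L - 2 * sqrt L - 1 / 2) / sqrt (2 * pi) - 1 / (real d)\<^sup>2"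
  define K where "K = int (d ^ 3) + 1"
  define N where "N = sphere_net d (1 / real d ^ 3) K"
  have L: "0 \<le> L"
    using d by (simp add: L_def)
  have "0 < d * ln (2 * real d ^ 3 + 3) + d"
    using d by (intro add_nonneg_pos mult_nonneg_nonneg) auto
  then have "0 < n"
    using n by (cases "n = 0") auto
  have s_level: "s * sqrt ((1 - \<delta>) / d) = (1 - \<delta>) * sqrt (2 * L / d)"
  proof -
    have "s * sqrt ((1 - \<delta>) / d) = sqrt ((1 - \<delta>)\<^sup>2 * (2 * L / d))"
      unfolding s_def real_sqrt_mult[symmetric] by (simp add: power2_eq_square field_simps)
    also have "\<dots> = sqrt ((1 - \<delta>)\<^sup>2) * sqrt (2 * L / d)"
      by (rule real_sqrt_mult)
    finally show ?thesis
      using \<delta> by simp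
  qed
  \<comment> \<open>mesh \<open>d^-3\<close>, entry bound \<open>d\<close>, and rows aimed \<open>s\<close> standard deviations above the mean\<close>
  have "1 - card N * exp (- p * n)
    \<le> measure (gauss_sample d n) {u \<in> space (gauss_sample d n). t \<le> inf_max_proj d n u}"
    unfolding N_def p_def
  proof (rule prob_le_inf_max_proj_ge[OF d \<open>0 < n\<close>])
    show "1 - \<delta> \<le> 1 - 2 * real d * (1 / real d ^ 3)"
      using \<delta> d by (simp add: power2_eq_square power3_eq_cube)
    show "t \<le> s * sqrt ((1 - \<delta>) / real d) - real d * real d * (1 / real d ^ 3)"
      using t d by (simp add: s_level L_def power3_eq_cube)
  qed (use \<delta> d in \<open>auto simp: K_def s_def L\<close>)
  moreover have "card N * exp (- p * n) \<le> exp (d * ln (2 * real d ^ 3 + 3)) * exp (- q * n)"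
  proof (rule mult_mono)
    have "card N \<le> (2 * real d ^ 3 + 3) ^ d"
      using card_sphere_net_le[of K d "1 / real d ^ 3"] by (simp add: N_def K_def algebra_simps)
    also have "\<dots> = exp (ln (2 * real d ^ 3 + 3)) ^ d"
      by (subst exp_ln) (auto intro: add_nonneg_pos)
    also have "\<dots> = exp (d * ln (2 * real d ^ 3 + 3))"
      by (simp add: exp_of_nat_mult)
    finally show "card N \<le> exp (d * ln (2 * real d ^ 3 + 3))" .
    have "exp (- (1 - \<delta>) * L - 2 * sqrt L - 1 / 2) \<le> exp (- (s + 1)\<^sup>2 / 2)"
      unfolding s_def using \<delta> L by (intro exp_neg_shifted_sq_ge) auto
    then have "q \<le> p"
      unfolding p_def q_def by (intro diff_right_mono divide_right_mono) auto
    then show "exp (- p * n) \<le> exp (- q * n)"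
      by (simp add: mult_right_mono)
  qed simp_all
  moreover have "exp (d * ln (2 * real d ^ 3 + 3)) * exp (- q * n) \<le> exp (- real d)"
  proof -
    have "d * ln (2 * real d ^ 3 + 3) + - q * n \<le> - real d"
      using n unfolding q_def L_def by linarith
    then show ?thesis
      unfolding exp_add[symmetric] exp_le_cancel_iff .
  qed
  ultimately show ?thesis
    by linarith
qed

lemma eventually_prob_le_inf_max_proj_ge:
  fixes c \<delta> \<epsilon> :: real
  assumes c: "0 < c" and \<delta>: "0 < \<delta>" "\<delta> < 1" and \<epsilon>: "sqrt (2 - \<epsilon>) < (1 - \<delta>) * sqrt 2"
  shows "\<forall>\<^sub>F d in sequentially. \<forall>n. c * (real d)\<^sup>2 / ln d \<le> n \<longrightarrow>
    1 - exp (- real d) \<le> measure (gauss_sample d n)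
      {u \<in> space (gauss_sample d n). sqrt ((2 - \<epsilon>) * ln d / d) \<le> inf_max_proj d n u}"
proof -
  define \<kappa> where "\<kappa> = (1 - \<delta>) * sqrt 2 - sqrt (2 - \<epsilon>)"
  define p where "p d = exp (- (1 - \<delta>) * ln d - 2 * sqrt (ln d) - 1 / 2) / sqrt (2 * pi)
    - 1 / (real d)\<^sup>2" for d :: nat
  have "0 < \<kappa>"
    using \<epsilon> by (simp add: \<kappa>_def)
  then have "\<forall>\<^sub>F d in sequentially. 1 / real d \<le> \<kappa> * sqrt (ln d / d)"
    by real_asymp
  moreover have "\<forall>\<^sub>F d in sequentially. 2 / (real d)\<^sup>2 \<le> \<delta>"
    using \<delta> by real_asymp
  moreover have "\<forall>\<^sub>F d in sequentially. 0 \<le> p d"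
    unfolding p_def using \<delta> by real_asymp
  moreover have
    "\<forall>\<^sub>F d in sequentially. d * ln (2 * real d ^ 3 + 3) + d \<le> p d * (c * (real d)\<^sup>2 / ln d)"
    unfolding p_def using c \<delta> by real_asymp
  moreover have "\<forall>\<^sub>F d in sequentially. 1 < d"
    by (rule eventually_gt_at_top)
  ultimately show ?thesis
  proof eventually_elim
    case (elim d)
    have "sqrt ((2 - \<epsilon>) * ln d / d) = sqrt (2 - \<epsilon>) * sqrt (ln d / d)"
      and "sqrt (2 * ln d / d) = sqrt 2 * sqrt (ln d / d)"
      by (simp_all add: real_sqrt_mult[symmetric])
    then have threshold: "sqrt ((2 - \<epsilon>) * ln d / d) \<le> (1 - \<delta>) * sqrt (2 * ln d / d) - 1 / d"
      using elim by (simp add: \<kappa>_def algebra_simps)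
    show ?case
    proof (intro allI impI)
      fix n :: nat
      assume "c * (real d)\<^sup>2 / ln d \<le> n"
      then have "p d * (c * (real d)\<^sup>2 / ln d) \<le> p d * n"
        using elim by (intro mult_left_mono) auto
      with elim show "1 - exp (- real d) \<le> measure (gauss_sample d n)
          {u \<in> space (gauss_sample d n). sqrt ((2 - \<epsilon>) * ln d / d) \<le> inf_max_proj d n u}"
        by (intro prob_le_inf_max_proj_ge_1_minus_exp[OF _ \<delta> _ threshold]) (auto simp: p_def)
    qed
  qed
qed

theorem lemma2p4:
  fixes c \<epsilon> :: real
  assumes "c > 0" and "\<epsilon> > 0"
  shows "\<exists>C>0. \<exists>d0::nat. \<forall>d\<ge>d0. \<forall>n::nat. real n \<ge> c * (real d)\<^sup>2 / ln (real d) \<longrightarrow>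
           measure (gauss_sample d n)
             {u \<in> space (gauss_sample d n).
                inf_max_proj d n u \<ge> sqrt ((2 - \<epsilon>) * ln (real d) / real d)}
           \<ge> 1 - exp (- C * real d)"
proof -
  define \<delta> where "\<delta> = min \<epsilon> 1 / 4"
  have \<delta>: "0 < \<delta>" "\<delta> < 1"
    using assms(2) by (auto simp: \<delta>_def)
  have "2 - \<epsilon> \<le> 2 - 4 * \<delta>"
    by (simp add: \<delta>_def)
  also have "\<dots> < 2 * (1 - \<delta>)\<^sup>2"
    using mult_pos_pos[OF \<delta>(1) \<delta>(1)] by (simp add: power2_eq_square algebra_simps)
  finally have "sqrt (2 - \<epsilon>) < sqrt (2 * (1 - \<delta>)\<^sup>2)"
    by (rule real_sqrt_less_mono)
  also have "\<dots> = (1 - \<delta>) * sqrt 2"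
    using \<delta> by (simp add: real_sqrt_mult)
  finally have "sqrt (2 - \<epsilon>) < (1 - \<delta>) * sqrt 2" .
  from eventually_prob_le_inf_max_proj_ge[OF assms(1) \<delta> this]
  obtain d0 where "\<forall>d\<ge>d0. \<forall>n. c * (real d)\<^sup>2 / ln d \<le> n \<longrightarrow>
      1 - exp (- real d) \<le> measure (gauss_sample d n)
        {u \<in> space (gauss_sample d n). sqrt ((2 - \<epsilon>) * ln d / d) \<le> inf_max_proj d n u}"
    unfolding eventually_sequentially by blast
  then show ?thesis
    by (intro exI[of _ 1] conjI exI[of _ d0]) simp_all
qed

end
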